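(* Let $q\ge 2$ and let $A_1$ be the distance-1 adjacency matrix of the Hamming scheme $H(3,q)$. Then there exist constants $\alpha,\beta$ with $A_1^3=\beta A_1+\alpha(J-A_1)$ if and only if $q=3$. Moreover, for $q=3$, with $A_i$ the distance-$i$ adjacency matrices of $H(3,3)$, $$A_1^3=15A_1+6(J-A_1),\quad A_2^3=69A_2+60(J-A_2),\quad (A_3+I)^3=33(A_3+I)+24(J-A_3-I),$$ so each of $A_1$, $A_2$, $A_3+I$ is the incidence matrix of a symmetric partial geometric design.
   Context: The Hamming scheme $H(d,q)$ has vertex set $S^d$ for a $q$-element set $S$, with $(\mathbf x,\mathbf y)\in R_i$ iff the Hamming distance $\delta(\mathbf x,\mathbf y)=|\{j: x_j\neq y_j\}|$ equals $i$; $A_i$ is the adjacency matrix of $R_i$, $J$ the all-ones matrix. A symmetric partial geometric design with parameters $(v,k;\alpha,\beta)$ is a design with $v$ points, $v$ blocks, block size and replication $k$, whose incidence matrix $N$ satisfies $NN^TN=\beta N+\alpha(J-N)$. *)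

theory Defs
  imports Complex_Main
begin

definition ham_verts :: "nat \<Rightarrow> nat \<Rightarrow> nat list set" where
  "ham_verts d q = {xs. length xs = d \<and> (\<forall>i<d. xs ! i < q)}"

definition ham_dist :: "nat list \<Rightarrow> nat list \<Rightarrow> nat" where
  "ham_dist xs ys = card {j. j < length xs \<and> xs ! j \<noteq> ys ! j}"

definition ham_adj :: "nat \<Rightarrow> nat list \<Rightarrow> nat list \<Rightarrow> real" where
  "ham_adj i xs ys = (if ham_dist xs ys = i then 1 else 0)"

definition idm :: "'a \<Rightarrow> 'a \<Rightarrow> real" where
  "idm x y = (if x = y then 1 else 0)"

definition mmul :: "'a set \<Rightarrow> ('a \<Rightarrow> 'a \<Rightarrow> real) \<Rightarrow> ('a \<Rightarrow> 'a \<Rightarrow> real) \<Rightarrow> 'a \<Rightarrow> 'a \<Rightarrow> real" where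
  "mmul V A B x y = (\<Sum>z\<in>V. A x z * B z y)"

definition mcube :: "'a set \<Rightarrow> ('a \<Rightarrow> 'a \<Rightarrow> real) \<Rightarrow> 'a \<Rightarrow> 'a \<Rightarrow> real" where
  "mcube V A = mmul V (mmul V A A) A"

definition mtrans :: "('a \<Rightarrow> 'b \<Rightarrow> real) \<Rightarrow> 'b \<Rightarrow> 'a \<Rightarrow> real" where
  "mtrans N y x = N x y"

text \<open>Symmetric partial geometric design with parameters (v,k;alpha,beta), given by its
  incidence matrix N whose rows (points) and columns (blocks) are both indexed by P
  (v points, v blocks): N is 0/1, every block has size k, every point has replication k,
  and N N^T N = beta N + alpha (J - N).\<close>
definition sym_pg_design :: "'a set \<Rightarrow> ('a \<Rightarrow> 'a \<Rightarrow> real) \<Rightarrow> nat \<Rightarrow> nat \<Rightarrow> real \<Rightarrow> real \<Rightarrow> bool" where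
  "sym_pg_design P N v k \<alpha> \<beta> \<longleftrightarrow>
     finite P \<and> card P = v \<and>
     (\<forall>x\<in>P. \<forall>y\<in>P. N x y = 0 \<or> N x y = 1) \<and>
     (\<forall>x\<in>P. (\<Sum>y\<in>P. N x y) = real k) \<and>
     (\<forall>y\<in>P. (\<Sum>x\<in>P. N x y) = real k) \<and>
     (\<forall>x\<in>P. \<forall>y\<in>P. mmul P (mmul P N (mtrans N)) N x y = \<beta> * N x y + \<alpha> * (1 - N x y))"

end

theory Submission
  imports Defs
begin

text \<open>On \<open>H(3,q)\<close> consider the matrices whose \<open>(x,y)\<close> entry depends only on the equality
  pattern \<open>(x\<^sub>0 = y\<^sub>0, x\<^sub>1 = y\<^sub>1, x\<^sub>2 = y\<^sub>2)\<close>. In a product of two of them the sum over the middle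
  vertex factorises over the three coordinates, so the product is again of this kind, with
  coefficients given by an explicit count of symbols in each coordinate. The matrices \<open>A\<^sub>i\<close> are of
  this kind, so their squares and cubes are finite computations on the eight patterns. The entries
  of \<open>A\<^sub>1\<^sup>3\<close> at distance 0 and 3, where \<open>A\<^sub>1\<close> vanishes, are \<open>3(q-1)(q-2)\<close> and 6; they agree only
  for \<open>q = 3\<close>. For a symmetric 0/1 matrix the row sums are the diagonal entries of its square,
  which gives the replication number of each design.\<close>

lemma ham_verts_3_eq:
  "ham_verts 3 q = (\<lambda>(a, b, c). [a, b, c]) ` ({..<q} \<times> {..<q} \<times> {..<q})"
proof -
  have "xs \<in> ham_verts 3 q \<longleftrightarrow> (\<exists>a<q. \<exists>b<q. \<exists>c<q. xs = [a, b, c])" for xs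
    by (auto simp: ham_verts_def numeral_3_eq_3 length_Suc_conv less_Suc_eq)
  then show ?thesis by (auto simp: image_iff)
qed

lemma sum_ham_verts_3:
  "(\<Sum>x\<in>ham_verts 3 q. f x) = (\<Sum>a<q. \<Sum>b<q. \<Sum>c<q. f [a, b, c])"
  unfolding ham_verts_3_eq
  by (subst sum.reindex) (auto simp: inj_on_def sum.cartesian_product split_beta)

lemma finite_ham_verts_3: "finite (ham_verts 3 q)"
  unfolding ham_verts_3_eq by simp

lemma card_ham_verts_3: "card (ham_verts 3 q) = q ^ 3"
  using sum_ham_verts_3[of "\<lambda>_. 1 :: nat" q] by (simp add: power3_eq_cube)

lemma sum_product3:
  fixes f g h :: "'a \<Rightarrow> 'b :: comm_semiring_1"
  shows "(\<Sum>a\<in>A. \<Sum>b\<in>B. \<Sum>c\<in>C. f a * g b * h c) = sum f A * sum g B * sum h C"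
proof -
  have "(\<Sum>a\<in>A. \<Sum>b\<in>B. \<Sum>c\<in>C. f a * g b * h c) = (\<Sum>a\<in>A. \<Sum>b\<in>B. f a * g b * sum h C)"
    by (simp add: sum_distrib_left)
  also have "\<dots> = (\<Sum>a\<in>A. \<Sum>b\<in>B. f a * g b) * sum h C"
    by (simp add: sum_distrib_right)
  also have "\<dots> = sum f A * sum g B * sum h C"
    by (simp only: sum_product)
  finally show ?thesis .
qed

text \<open>\<open>coord_count q (a = b) r s\<close> is the number of symbols \<open>c < q\<close> with \<open>(a = c) = r\<close> and
  \<open>(c = b) = s\<close>.\<close>

definition coord_count :: "nat \<Rightarrow> bool \<Rightarrow> bool \<Rightarrow> bool \<Rightarrow> real" where
  "coord_count q e r s =
     (if e then (if r \<and> s then 1 else if \<not> r \<and> \<not> s then real q - 1 else 0)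
      else (if r \<and> s then 0 else if r \<or> s then 1 else real q - 2))"

lemma sum_coord_count:
  assumes "a < q" "b < q"
  shows "(\<Sum>c<q. of_bool ((a = c) = r \<and> (c = b) = s)) = coord_count q (a = b) r s"
proof -
  have "{c. c < q \<and> (a = c) = r \<and> (c = b) = s}
      = (if r then {a} else {..<q} - {a}) \<inter> (if s then {b} else {..<q} - {b})"
    using assms by auto
  then have "(\<Sum>c<q. of_bool ((a = c) = r \<and> (c = b) = s) :: real)
      = real (card ((if r then {a} else {..<q} - {a}) \<inter> (if s then {b} else {..<q} - {b})))"
    by (simp add: Int_def)
  also have "\<dots> = coord_count q (a = b) r s"
    using assms by (cases r; cases s) (auto simp: coord_count_def Diff_Int_distrib2 Int_absorb1)
  finally show ?thesis .
qed

type_synonym pattern = "bool \<times> bool \<times> bool"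

definition eq_pattern :: "nat list \<Rightarrow> nat list \<Rightarrow> pattern" where
  "eq_pattern x y = (x ! 0 = y ! 0, x ! 1 = y ! 1, x ! 2 = y ! 2)"

definition pattern_count :: "nat \<Rightarrow> pattern \<Rightarrow> pattern \<Rightarrow> pattern \<Rightarrow> real" where
  "pattern_count q p r s =
     coord_count q (fst p) (fst r) (fst s) * coord_count q (fst (snd p)) (fst (snd r)) (fst (snd s))
     * coord_count q (snd (snd p)) (snd (snd r)) (snd (snd s))"

lemma sum_eq_pattern_pair:
  assumes "x \<in> ham_verts 3 q" "y \<in> ham_verts 3 q"
  shows "(\<Sum>t\<in>ham_verts 3 q. of_bool (eq_pattern x t = r \<and> eq_pattern t y = s))
    = pattern_count q (eq_pattern x y) r s"
proof -
  obtain x0 x1 x2 where x: "x = [x0, x1, x2]" "x0 < q" "x1 < q" "x2 < q"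
    using assms(1) unfolding ham_verts_3_eq by auto
  obtain y0 y1 y2 where y: "y = [y0, y1, y2]" "y0 < q" "y1 < q" "y2 < q"
    using assms(2) unfolding ham_verts_3_eq by auto
  define f where "f i u v a = (of_bool ((u = a) = i r \<and> (a = v) = i s) :: real)"
    for i :: "pattern \<Rightarrow> bool" and u v a :: nat
  have "(\<Sum>t\<in>ham_verts 3 q. of_bool (eq_pattern x t = r \<and> eq_pattern t y = s))
      = (\<Sum>a<q. \<Sum>b<q. \<Sum>c<q. f fst x0 y0 a * f (fst \<circ> snd) x1 y1 b * f (snd \<circ> snd) x2 y2 c)"
    unfolding sum_ham_verts_3 f_def x(1) y(1)
    by (intro sum.cong refl) (auto simp: eq_pattern_def prod_eq_iff)
  also have "\<dots> = sum (f fst x0 y0) {..<q} * sum (f (fst \<circ> snd) x1 y1) {..<q}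
      * sum (f (snd \<circ> snd) x2 y2) {..<q}"
    by (rule sum_product3)
  also have "\<dots> = pattern_count q (eq_pattern x y) r s"
    unfolding f_def using x y by (simp only: sum_coord_count) (simp add: pattern_count_def eq_pattern_def)
  finally show ?thesis .
qed

definition pattern_mat :: "(pattern \<Rightarrow> real) \<Rightarrow> nat list \<Rightarrow> nat list \<Rightarrow> real" where
  "pattern_mat c x y = c (eq_pattern x y)"

definition pattern_mult :: "nat \<Rightarrow> (pattern \<Rightarrow> real) \<Rightarrow> (pattern \<Rightarrow> real) \<Rightarrow> pattern \<Rightarrow> real" where
  "pattern_mult q c c' p = (\<Sum>r\<in>UNIV. \<Sum>s\<in>UNIV. c r * c' s * pattern_count q p r s)"

lemma mmul_pattern_mat:
  assumes "x \<in> ham_verts 3 q" "y \<in> ham_verts 3 q"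
  shows "mmul (ham_verts 3 q) (pattern_mat c) (pattern_mat c') x y = pattern_mult q c c' (eq_pattern x y)"
proof -
  let ?V = "ham_verts 3 q"
  have delta_expansion:
    "c u * c' v = (\<Sum>r\<in>UNIV. \<Sum>s\<in>UNIV. c r * c' s * of_bool (u = r \<and> v = s))" for u v
  proof -
    have "c r * c' s * of_bool (u = r \<and> v = s) = (if v = s then if u = r then c r * c' s else 0 else 0)"
      for r s
      by simp
    then show ?thesis by (simp add: sum.delta')
  qed
  have "mmul ?V (pattern_mat c) (pattern_mat c') x y
      = (\<Sum>t\<in>?V. \<Sum>r\<in>UNIV. \<Sum>s\<in>UNIV. c r * c' s * of_bool (eq_pattern x t = r \<and> eq_pattern t y = s))"
    unfolding mmul_def pattern_mat_def by (rule sum.cong[OF refl delta_expansion])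
  also have "\<dots> = (\<Sum>r\<in>UNIV. \<Sum>s\<in>UNIV. c r * c' s
      * (\<Sum>t\<in>?V. of_bool (eq_pattern x t = r \<and> eq_pattern t y = s)))"
    by (simp only: sum.swap[of _ ?V] sum_distrib_left)
  also have "\<dots> = pattern_mult q c c' (eq_pattern x y)"
    by (simp add: sum_eq_pattern_pair[OF assms] pattern_mult_def)
  finally show ?thesis .
qed

lemma mmul_cong:
  assumes "\<And>u v. u \<in> V \<Longrightarrow> v \<in> V \<Longrightarrow> A u v = A' u v"
    and "\<And>u v. u \<in> V \<Longrightarrow> v \<in> V \<Longrightarrow> B u v = B' u v"
    and "x \<in> V" "y \<in> V"
  shows "mmul V A B x y = mmul V A' B' x y"
  unfolding mmul_def using assms by (intro sum.cong) auto

lemma mcube_cong: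
  assumes "\<And>u v. u \<in> V \<Longrightarrow> v \<in> V \<Longrightarrow> A u v = A' u v" and "x \<in> V" "y \<in> V"
  shows "mcube V A x y = mcube V A' x y"
  unfolding mcube_def using assms by (intro mmul_cong) auto

definition disagreements :: "pattern \<Rightarrow> nat" where
  "disagreements p = of_bool (\<not> fst p) + of_bool (\<not> fst (snd p)) + of_bool (\<not> snd (snd p))"

definition dist_fn :: "real list \<Rightarrow> pattern \<Rightarrow> real" where
  "dist_fn l p = l ! disagreements p"

lemma disagreements_less_4: "disagreements p < 4"
  by (simp add: disagreements_def)

lemma ham_dist_eq_disagreements:
  assumes "length x = 3"
  shows "ham_dist x y = disagreements (eq_pattern x y)"
proof -
  have "ham_dist x y = card ({..<3} \<inter> {j. x ! j \<noteq> y ! j})"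
    unfolding ham_dist_def using assms by (metis Collect_conj_eq lessThan_def)
  also have "\<dots> = (\<Sum>j<3. of_bool (x ! j \<noteq> y ! j))"
    by simp
  also have "\<dots> = disagreements (eq_pattern x y)"
    by (simp add: eval_nat_numeral disagreements_def eq_pattern_def)
  finally show ?thesis .
qed

lemma ham_adj_eq_pattern_mat_pointwise:
  assumes "x \<in> ham_verts 3 q" "y \<in> ham_verts 3 q"
  shows "ham_adj 1 x y = pattern_mat (dist_fn [0, 1, 0, 0]) x y"
    and "ham_adj 2 x y = pattern_mat (dist_fn [0, 0, 1, 0]) x y"
    and "ham_adj 3 x y + idm x y = pattern_mat (dist_fn [1, 0, 0, 1]) x y"
proof -
  obtain x0 x1 x2 where x: "x = [x0, x1, x2]"
    using assms(1) unfolding ham_verts_3_eq by auto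
  obtain y0 y1 y2 where y: "y = [y0, y1, y2]"
    using assms(2) unfolding ham_verts_3_eq by auto
  have "ham_dist x y = disagreements (eq_pattern x y)"
    using x by (simp add: ham_dist_eq_disagreements)
  then show "ham_adj 1 x y = pattern_mat (dist_fn [0, 1, 0, 0]) x y"
    and "ham_adj 2 x y = pattern_mat (dist_fn [0, 0, 1, 0]) x y"
    and "ham_adj 3 x y + idm x y = pattern_mat (dist_fn [1, 0, 0, 1]) x y"
    unfolding ham_adj_def idm_def pattern_mat_def dist_fn_def
    by (auto simp: x y disagreements_def eq_pattern_def)
qed

lemma ham_adj_eq_pattern_mat:
  "\<forall>x\<in>ham_verts 3 q. \<forall>y\<in>ham_verts 3 q. ham_adj 1 x y = pattern_mat (dist_fn [0, 1, 0, 0]) x y"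
  "\<forall>x\<in>ham_verts 3 q. \<forall>y\<in>ham_verts 3 q. ham_adj 2 x y = pattern_mat (dist_fn [0, 0, 1, 0]) x y"
  "\<forall>x\<in>ham_verts 3 q. \<forall>y\<in>ham_verts 3 q.
     ham_adj 3 x y + idm x y = pattern_mat (dist_fn [1, 0, 0, 1]) x y"
  using ham_adj_eq_pattern_mat_pointwise by blast+

lemma pattern_fun_eqI: "(\<And>a b c. f (a, b, c) = g (a, b, c)) \<Longrightarrow> f = g"
  by auto

lemma sum_UNIV_pattern:
  "(\<Sum>r\<in>UNIV. f r) = (\<Sum>a\<in>UNIV. \<Sum>b\<in>UNIV. \<Sum>c\<in>UNIV. f (a, b, c :: bool))"
  by (simp add: UNIV_Times_UNIV[symmetric] sum.cartesian_product del: UNIV_Times_UNIV)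

lemmas pattern_mult_simps = pattern_mult_def pattern_count_def coord_count_def dist_fn_def
  disagreements_def sum_UNIV_pattern UNIV_bool

lemma adj1_square_coeffs:
  "pattern_mult q (dist_fn [0, 1, 0, 0]) (dist_fn [0, 1, 0, 0])
     = dist_fn [3 * (real q - 1), real q - 2, 2, 0]"
  by (rule pattern_fun_eqI) (auto simp: pattern_mult_simps algebra_simps)

lemma adj1_cube_coeffs:
  "pattern_mult q (dist_fn [3 * (real q - 1), real q - 2, 2, 0]) (dist_fn [0, 1, 0, 0])
     = dist_fn [3 * (real q - 1) * (real q - 2), (real q)\<^sup>2 + 3 * real q - 3, 6 * (real q - 2), 6]"
  by (rule pattern_fun_eqI) (auto simp: pattern_mult_simps algebra_simps power2_eq_square)

lemma adj2_square_coeffs_3: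
  "pattern_mult 3 (dist_fn [0, 0, 1, 0]) (dist_fn [0, 0, 1, 0]) = dist_fn [12, 4, 5, 6]"
  by (rule pattern_fun_eqI) (auto simp: pattern_mult_simps)

lemma adj2_cube_coeffs_3:
  "pattern_mult 3 (dist_fn [12, 4, 5, 6]) (dist_fn [0, 0, 1, 0]) = dist_fn [60, 60, 69, 60]"
  by (rule pattern_fun_eqI) (auto simp: pattern_mult_simps)

lemma adj3_id_square_coeffs_3:
  "pattern_mult 3 (dist_fn [1, 0, 0, 1]) (dist_fn [1, 0, 0, 1]) = dist_fn [9, 4, 2, 3]"
  by (rule pattern_fun_eqI) (auto simp: pattern_mult_simps)

lemma adj3_id_cube_coeffs_3:
  "pattern_mult 3 (dist_fn [9, 4, 2, 3]) (dist_fn [1, 0, 0, 1]) = dist_fn [33, 24, 24, 33]"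
  by (rule pattern_fun_eqI) (auto simp: pattern_mult_simps)

lemma mcube_dist_fn:
  assumes N: "\<forall>u\<in>ham_verts 3 q. \<forall>v\<in>ham_verts 3 q. N u v = pattern_mat (dist_fn l) u v"
    and square: "pattern_mult q (dist_fn l) (dist_fn l) = dist_fn l2"
    and cube: "pattern_mult q (dist_fn l2) (dist_fn l) = dist_fn l3"
    and x: "x \<in> ham_verts 3 q" and y: "y \<in> ham_verts 3 q"
  shows "mcube (ham_verts 3 q) N x y = dist_fn l3 (eq_pattern x y)"
proof -
  let ?V = "ham_verts 3 q" and ?P = "pattern_mat (dist_fn l)"
  have "mcube ?V N x y = mmul ?V (mmul ?V ?P ?P) ?P x y"
    unfolding mcube_def[symmetric] using N x y by (intro mcube_cong) auto
  also have "\<dots> = mmul ?V (pattern_mat (dist_fn l2)) ?P x y"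
    using x y by (intro mmul_cong) (simp_all add: mmul_pattern_mat square pattern_mat_def)
  also have "\<dots> = dist_fn l3 (eq_pattern x y)"
    using x y by (simp add: mmul_pattern_mat cube)
  finally show ?thesis .
qed

lemma mcube_dist_fn_linear:
  assumes N: "\<forall>u\<in>ham_verts 3 q. \<forall>v\<in>ham_verts 3 q. N u v = pattern_mat (dist_fn l) u v"
    and "pattern_mult q (dist_fn l) (dist_fn l) = dist_fn l2"
    and "pattern_mult q (dist_fn l2) (dist_fn l) = dist_fn l3"
    and linear: "\<forall>i<4. l3 ! i = \<beta> * l ! i + \<alpha> * (1 - l ! i)"
  shows "\<forall>x\<in>ham_verts 3 q. \<forall>y\<in>ham_verts 3 q.
           mcube (ham_verts 3 q) N x y = \<beta> * N x y + \<alpha> * (1 - N x y)"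
  using mcube_dist_fn[OF assms(1-3)] N linear disagreements_less_4
  by (simp add: pattern_mat_def dist_fn_def)

lemma adj1_cube_3:
  "\<forall>x\<in>ham_verts 3 3. \<forall>y\<in>ham_verts 3 3.
     mcube (ham_verts 3 3) (ham_adj 1) x y = 15 * ham_adj 1 x y + 6 * (1 - ham_adj 1 x y)"
  by (rule mcube_dist_fn_linear[OF ham_adj_eq_pattern_mat(1) adj1_square_coeffs adj1_cube_coeffs])
     (simp_all add: less_Suc_eq numeral_eq_Suc)

lemma adj2_cube_3:
  "\<forall>x\<in>ham_verts 3 3. \<forall>y\<in>ham_verts 3 3.
     mcube (ham_verts 3 3) (ham_adj 2) x y = 69 * ham_adj 2 x y + 60 * (1 - ham_adj 2 x y)"
  by (rule mcube_dist_fn_linear[OF ham_adj_eq_pattern_mat(2) adj2_square_coeffs_3 adj2_cube_coeffs_3])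
     (simp_all add: less_Suc_eq numeral_eq_Suc)

lemma adj3_id_cube_3:
  "\<forall>x\<in>ham_verts 3 3. \<forall>y\<in>ham_verts 3 3.
     mcube (ham_verts 3 3) (\<lambda>u v. ham_adj 3 u v + idm u v) x y
       = 33 * (ham_adj 3 x y + idm x y) + 24 * (1 - (ham_adj 3 x y + idm x y))"
  by (rule mcube_dist_fn_linear[OF ham_adj_eq_pattern_mat(3) adj3_id_square_coeffs_3 adj3_id_cube_coeffs_3])
     (simp_all add: less_Suc_eq numeral_eq_Suc)

lemma adj1_cube_linear_iff:
  assumes "q \<ge> 2"
  shows "(\<exists>\<alpha> \<beta> :: real. \<forall>x\<in>ham_verts 3 q. \<forall>y\<in>ham_verts 3 q.
            mcube (ham_verts 3 q) (ham_adj 1) x y = \<beta> * ham_adj 1 x y + \<alpha> * (1 - ham_adj 1 x y))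
         \<longleftrightarrow> q = 3"
proof
  assume "\<exists>\<alpha> \<beta> :: real. \<forall>x\<in>ham_verts 3 q. \<forall>y\<in>ham_verts 3 q.
            mcube (ham_verts 3 q) (ham_adj 1) x y = \<beta> * ham_adj 1 x y + \<alpha> * (1 - ham_adj 1 x y)"
  then obtain \<alpha> \<beta> :: real where linear: "\<forall>x\<in>ham_verts 3 q. \<forall>y\<in>ham_verts 3 q.
      mcube (ham_verts 3 q) (ham_adj 1) x y = \<beta> * ham_adj 1 x y + \<alpha> * (1 - ham_adj 1 x y)"
    by blast
  have o: "[0, 0, 0] \<in> ham_verts 3 q" and e: "[1, 1, 1] \<in> ham_verts 3 q"
    using assms by (auto simp: ham_verts_3_eq image_iff)
  note cube = mcube_dist_fn[OF ham_adj_eq_pattern_mat(1) adj1_square_coeffs adj1_cube_coeffs]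
  have "3 * (real q - 1) * (real q - 2) = \<alpha>"
    using linear cube[OF o o] ham_adj_eq_pattern_mat(1) o
    by (simp add: pattern_mat_def dist_fn_def disagreements_def eq_pattern_def)
  moreover have "6 = \<alpha>"
    using linear cube[OF o e] ham_adj_eq_pattern_mat(1) o e
    by (simp add: pattern_mat_def dist_fn_def disagreements_def eq_pattern_def)
  ultimately have "real q * (real q - 3) = 0"
    by (simp add: algebra_simps)
  with assms show "q = 3" by simp
next
  assume "q = 3"
  with adj1_cube_3 show "\<exists>\<alpha> \<beta> :: real. \<forall>x\<in>ham_verts 3 q. \<forall>y\<in>ham_verts 3 q.
      mcube (ham_verts 3 q) (ham_adj 1) x y = \<beta> * ham_adj 1 x y + \<alpha> * (1 - ham_adj 1 x y)"
    by blast
qed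

lemma sym_pg_design_symmetricI:
  assumes "finite P" "card P = v"
    and zero_one: "\<forall>x\<in>P. \<forall>y\<in>P. N x y = 0 \<or> N x y = 1"
    and sym: "\<forall>x\<in>P. \<forall>y\<in>P. N x y = N y x"
    and diag: "\<forall>x\<in>P. mmul P N N x x = real k"
    and cube: "\<forall>x\<in>P. \<forall>y\<in>P. mcube P N x y = \<beta> * N x y + \<alpha> * (1 - N x y)"
  shows "sym_pg_design P N v k \<alpha> \<beta>"
proof -
  have row: "(\<Sum>y\<in>P. N x y) = real k" if x: "x \<in> P" for x
  proof -
    have "(\<Sum>y\<in>P. N x y) = (\<Sum>y\<in>P. N x y * N y x)"
      using zero_one sym x by (intro sum.cong) force+
    also have "\<dots> = real k"
      using diag x by (simp add: mmul_def)
    finally show ?thesis .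
  qed
  have column: "(\<Sum>x\<in>P. N x y) = real k" if y: "y \<in> P" for y
    using row[OF y] sym y by (metis (no_types, lifting) sum.cong)
  have "mmul P (mmul P N (mtrans N)) N x y = mcube P N x y" if "x \<in> P" "y \<in> P" for x y
    unfolding mcube_def using that sym
    by (intro mmul_cong mmul_cong[of P]) (auto simp: mtrans_def)
  with assms(1,2) zero_one row column cube show ?thesis
    unfolding sym_pg_design_def by simp
qed

lemma eq_pattern_commute: "eq_pattern x y = eq_pattern y x"
  by (auto simp: eq_pattern_def)

lemma sym_pg_design_dist_fn:
  assumes N: "\<forall>u\<in>ham_verts 3 q. \<forall>v\<in>ham_verts 3 q. N u v = pattern_mat (dist_fn l) u v"
    and zero_one: "\<forall>i<4. l ! i = 0 \<or> l ! i = 1"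
    and square: "pattern_mult q (dist_fn l) (dist_fn l) = dist_fn l2" and k: "l2 ! 0 = real k"
    and cube: "\<forall>x\<in>ham_verts 3 q. \<forall>y\<in>ham_verts 3 q.
                 mcube (ham_verts 3 q) N x y = \<beta> * N x y + \<alpha> * (1 - N x y)"
  shows "sym_pg_design (ham_verts 3 q) N (q ^ 3) k \<alpha> \<beta>"
proof (rule sym_pg_design_symmetricI[OF finite_ham_verts_3 card_ham_verts_3 _ _ _ cube])
  show "\<forall>x\<in>ham_verts 3 q. \<forall>y\<in>ham_verts 3 q. N x y = 0 \<or> N x y = 1"
    using N zero_one disagreements_less_4 by (simp add: pattern_mat_def dist_fn_def)
  show "\<forall>x\<in>ham_verts 3 q. \<forall>y\<in>ham_verts 3 q. N x y = N y x"
    using N by (simp add: pattern_mat_def eq_pattern_commute)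
  show "\<forall>x\<in>ham_verts 3 q. mmul (ham_verts 3 q) N N x x = real k"
  proof
    fix x assume x: "x \<in> ham_verts 3 q"
    have "mmul (ham_verts 3 q) N N x x = mmul (ham_verts 3 q) (pattern_mat (dist_fn l)) (pattern_mat (dist_fn l)) x x"
      using N x by (intro mmul_cong) auto
    also have "\<dots> = l2 ! 0"
      using x by (simp add: mmul_pattern_mat square dist_fn_def disagreements_def eq_pattern_def)
    finally show "mmul (ham_verts 3 q) N N x x = real k" using k by simp
  qed
qed

theorem proposition6p1:
  fixes q :: nat
  assumes "q \<ge> 2"
  shows "((\<exists>\<alpha> \<beta> :: real. \<forall>x\<in>ham_verts 3 q. \<forall>y\<in>ham_verts 3 q.
            mcube (ham_verts 3 q) (ham_adj 1) x y = \<beta> * ham_adj 1 x y + \<alpha> * (1 - ham_adj 1 x y))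
         \<longleftrightarrow> q = 3)
    \<and> (\<forall>x\<in>ham_verts 3 3. \<forall>y\<in>ham_verts 3 3.
            mcube (ham_verts 3 3) (ham_adj 1) x y = 15 * ham_adj 1 x y + 6 * (1 - ham_adj 1 x y))
    \<and> (\<forall>x\<in>ham_verts 3 3. \<forall>y\<in>ham_verts 3 3.
            mcube (ham_verts 3 3) (ham_adj 2) x y = 69 * ham_adj 2 x y + 60 * (1 - ham_adj 2 x y))
    \<and> (\<forall>x\<in>ham_verts 3 3. \<forall>y\<in>ham_verts 3 3.
            mcube (ham_verts 3 3) (\<lambda>u v. ham_adj 3 u v + idm u v) x y
              = 33 * (ham_adj 3 x y + idm x y) + 24 * (1 - ham_adj 3 x y - idm x y))
    \<and> (\<exists>k. sym_pg_design (ham_verts 3 3) (ham_adj 1) 27 k 6 15)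
    \<and> (\<exists>k. sym_pg_design (ham_verts 3 3) (ham_adj 2) 27 k 60 69)
    \<and> (\<exists>k. sym_pg_design (ham_verts 3 3) (\<lambda>u v. ham_adj 3 u v + idm u v) 27 k 24 33)"
proof -
  have "sym_pg_design (ham_verts 3 3) (ham_adj 1) (3 ^ 3) 6 6 15"
    by (rule sym_pg_design_dist_fn[OF ham_adj_eq_pattern_mat(1) _ adj1_square_coeffs _ adj1_cube_3])
       (simp_all add: less_Suc_eq numeral_eq_Suc)
  moreover have "sym_pg_design (ham_verts 3 3) (ham_adj 2) (3 ^ 3) 12 60 69"
    by (rule sym_pg_design_dist_fn[OF ham_adj_eq_pattern_mat(2) _ adj2_square_coeffs_3 _ adj2_cube_3])
       (simp_all add: less_Suc_eq numeral_eq_Suc)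
  moreover have "sym_pg_design (ham_verts 3 3) (\<lambda>u v. ham_adj 3 u v + idm u v) (3 ^ 3) 9 24 33"
    by (rule sym_pg_design_dist_fn[OF ham_adj_eq_pattern_mat(3) _ adj3_id_square_coeffs_3 _ adj3_id_cube_3])
       (simp_all add: less_Suc_eq numeral_eq_Suc)
  ultimately show ?thesis
    using adj1_cube_linear_iff[OF assms] adj1_cube_3 adj2_cube_3 adj3_id_cube_3
    by (auto simp: algebra_simps)
qed

end
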